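(* Let $P$ be a $3$-polytope with $\mathrm{InCone}(P)\neq\emptyset$. If $P$ has a $2$-face with an odd number of vertices, then $\dim\mathrm{InCone}(P)\le2$. If $P$ has two $2$-faces, each with an odd number of vertices, that share an edge, then $\dim\mathrm{InCone}(P)=1$, i.e. up to homothety (and translation) $P$ has a unique inscribed polytope with the same normal fan.
   Context: $\mathrm{InCone}(P)$ is the set of polytopes with all vertices on a common sphere and with the same normal fan as $P$, modulo translation; it is an open polyhedral cone (identified with the set of such polytopes whose inscribing sphere is centered at the origin). *)

theory Defs
  imports "HOL-Analysis.Analysis"
begin

definition normal_cone :: "(real^3) set \<Rightarrow> (real^3) set \<Rightarrow> (real^3) set" where
  "normal_cone P F = {c. \<forall>x\<in>F. \<forall>y\<in>P. c \<bullet> y \<le> c \<bullet> x}"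

definition normal_fan :: "(real^3) set \<Rightarrow> (real^3) set set" where
  "normal_fan P = {normal_cone P F | F. F face_of P \<and> F \<noteq> {}}"

text \<open>InCone(P): polytopes with the same normal fan as P whose vertices lie on a common
  sphere centered at the origin (canonical representatives modulo translation).\<close>
definition InCone :: "(real^3) set \<Rightarrow> (real^3) set set" where
  "InCone P = {Q. polytope Q \<and> normal_fan Q = normal_fan P \<and>
      (\<exists>r>0. \<forall>v. v extreme_point_of Q \<longrightarrow> norm v = r)}"

definition support_fun :: "(real^3) set \<Rightarrow> real^3 \<Rightarrow> real" where
  "support_fun Q u = Sup ((\<lambda>x. u \<bullet> x) ` Q)"

definition lin_indep_funs :: "('a \<Rightarrow> real) set \<Rightarrow> bool" where
  "lin_indep_funs S \<longleftrightarrow> finite S \<and>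
     (\<forall>c. (\<forall>x. (\<Sum>f\<in>S. c f * f x) = 0) \<longrightarrow> (\<forall>f\<in>S. c f = 0))"

text \<open>Dimension of InCone(P), via the linear embedding Q \<mapsto> support function of Q
  (Minkowski sum and positive scaling correspond to sum and scaling of support functions):
  the dimension of the linear span of this cone, i.e. the maximal number of linearly
  independent elements.\<close>
definition incone_dim :: "(real^3) set \<Rightarrow> nat" where
  "incone_dim P = Max {card S | S. S \<subseteq> support_fun ` InCone P \<and> lin_indep_funs S}"

definition vertex_count :: "(real^3) set \<Rightarrow> nat" where
  "vertex_count F = card {v. v extreme_point_of F}"

end

theory Submission
  imports Defs
begin

text \<open>
  Every vertex p of P has a vertex w(p) of Q \<in> InCone(P) with the same normal cone. Along an
  edge pq of P the segment from w(p) to w(q) is parallel to p - q, and both endpoints lie on a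
  sphere about the origin, so w(q) is the mirror image of w(p) in the hyperplane orthogonal to
  p - q. Such reflection labellings of the vertices form a linear space and, the edge graph being
  connected, are determined by their value at one vertex p0; as the support function of Q is
  read off from w, dim InCone(P) is at most the dimension of the space of these values.
  On a facet with normal n every reflection fixes n, while n \<times> w is transported by the
  negated reflections; around an odd cycle of edges this confines all values to the plane
  spanned by n and w(p0). Two odd facets through a common edge give two different such
  planes, and their intersection is the line through w(p0).
\<close>

lemma real_vector_eq_neg_self_iff: "(x::'a::real_vector) = - x \<longleftrightarrow> x = 0"
  by (metis add.inverse_neutral eq_neg_iff_add_eq_0 scaleR_2 scaleR_eq_0_iff zero_neq_numeral)

lemma orthogonal_to_ball_imp_zero:
  fixes z :: "'a::real_inner"
  assumes "\<delta> > 0" "\<And>u. u \<in> ball c \<delta> \<Longrightarrow> u \<bullet> z = 0"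
  shows "z = 0"
proof (rule ccontr)
  assume "z \<noteq> 0"
  define t where "t = \<delta> / 2 / norm z"
  have "c \<in> ball c \<delta>" "c + t *\<^sub>R z \<in> ball c \<delta>"
    using assms(1) \<open>z \<noteq> 0\<close> by (simp_all add: t_def dist_norm)
  then have "c \<bullet> z = 0" "(c + t *\<^sub>R z) \<bullet> z = 0"
    using assms(2) by blast+
  then have "t * (z \<bullet> z) = 0"
    by (simp add: inner_add_left)
  then show False
    using assms(1) \<open>z \<noteq> 0\<close> by (simp add: t_def)
qed

lemma parallel_if_orthogonal:
  fixes d e :: "'a::real_inner"
  assumes "e \<noteq> 0" "\<And>z. z \<bullet> e = 0 \<Longrightarrow> z \<bullet> d = 0"
  shows "d = ((d \<bullet> e) / (e \<bullet> e)) *\<^sub>R e"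
proof -
  define z where "z = d - ((d \<bullet> e) / (e \<bullet> e)) *\<^sub>R e"
  have "z \<bullet> e = 0"
    using assms(1) by (simp add: z_def inner_diff_left)
  then have "z \<bullet> z = 0"
    using assms(2)[of z] by (simp add: z_def inner_diff_right)
  then show ?thesis
    by (simp add: z_def)
qed

lemma inner_opposite_signs_if_independent:
  fixes x y :: "'a::real_inner"
  assumes "independent {x, y}" "x \<noteq> y"
  obtains b where "b \<bullet> x > 0" "b \<bullet> y < 0"
proof -
  have orthogonal_part: "\<exists>c. c \<bullet> u > 0 \<and> c \<bullet> u' = 0" if "u \<notin> span {u'}" for u u' :: 'a
  proof -
    define c where "c = u - ((u \<bullet> u') / (u' \<bullet> u')) *\<^sub>R u'"
    have "c \<noteq> 0"
    proof
      assume "c = 0"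
      then have "u = ((u \<bullet> u') / (u' \<bullet> u')) *\<^sub>R u'"
        by (simp add: c_def)
      moreover have "((u \<bullet> u') / (u' \<bullet> u')) *\<^sub>R u' \<in> span {u'}"
        by (simp add: span_base span_scale)
      ultimately show False
        using that by simp
    qed
    moreover have "c \<bullet> u' = 0"
      by (cases "u' = 0") (simp_all add: c_def inner_diff_left)
    then have "c \<bullet> u = c \<bullet> c"
      by (simp add: c_def inner_diff_right)
    ultimately show ?thesis
      by (intro exI[of _ c]) (simp add: \<open>c \<bullet> u' = 0\<close>)
  qed
  have "x \<notin> span {y}" "y \<notin> span {x}"
    using assms independent_insert[of x "{y}"] independent_insert[of y "{x}"]
    by (auto simp: insert_commute)
  then obtain cx cy where "cx \<bullet> x > 0" "cx \<bullet> y = 0" "cy \<bullet> y > 0" "cy \<bullet> x = 0"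
    using orthogonal_part by meson
  then show ?thesis
    using that[of "cx - cy"] by (simp add: inner_diff_left)
qed

lemma independent_if_separating_functionals:
  fixes x1 x2 x3 d1 d2 d3 :: "'a::euclidean_space"
  assumes d1: "d1 \<bullet> x1 = 0" "d1 \<bullet> x2 < 0" "d1 \<bullet> x3 < 0"
    and d2: "d2 \<bullet> x2 = 0" "d2 \<bullet> x1 < 0" "d2 \<bullet> x3 < 0"
    and d3: "d3 \<bullet> x3 = 0" "d3 \<bullet> x1 < 0" "d3 \<bullet> x2 < 0"
  shows "independent {x1, x2, x3}"
proof (rule ccontr)
  assume "\<not> independent {x1, x2, x3}"
  then obtain c where c: "(\<Sum>x\<in>{x1, x2, x3}. c x *\<^sub>R x) = 0" "\<exists>x\<in>{x1, x2, x3}. c x \<noteq> 0"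
    unfolding independent_explicit by blast
  have "x1 \<noteq> x2" "x1 \<noteq> x3" "x2 \<noteq> x3"
    using d1 d2 by auto
  then have "c x1 *\<^sub>R x1 + c x2 *\<^sub>R x2 + c x3 *\<^sub>R x3 = 0"
    using c(1) by (simp add: add.assoc)
  then have "d \<bullet> (c x1 *\<^sub>R x1 + c x2 *\<^sub>R x2 + c x3 *\<^sub>R x3) = 0" for d
    by simp
  then have lin: "c x1 * (d \<bullet> x1) + c x2 * (d \<bullet> x2) + c x3 * (d \<bullet> x3) = 0" for d
    by (simp add: inner_add_right)
  \<comment> \<open>each functional forces the two coefficients it does not kill to vanish together
    or to have opposite signs, which is impossible for all three pairs at once\<close>
  have opposite: "a * b \<le> 0 \<and> (a = 0 \<longleftrightarrow> b = 0)"
    if "a * s + b * t = 0" "s < 0" "t < 0" for a b s t :: real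
    using that by (smt (verit, ccfv_threshold) mult_less_0_iff zero_less_mult_iff)
  have "c x2 * c x3 \<le> 0 \<and> (c x2 = 0 \<longleftrightarrow> c x3 = 0)"
    using opposite[of "c x2" "d1 \<bullet> x2" "c x3" "d1 \<bullet> x3"] lin[of d1] d1 by simp
  moreover have "c x1 * c x3 \<le> 0 \<and> (c x1 = 0 \<longleftrightarrow> c x3 = 0)"
    using opposite[of "c x1" "d2 \<bullet> x1" "c x3" "d2 \<bullet> x3"] lin[of d2] d2 by simp
  moreover have "c x1 * c x2 \<le> 0 \<and> (c x1 = 0 \<longleftrightarrow> c x2 = 0)"
    using opposite[of "c x1" "d3 \<bullet> x1" "c x2" "d3 \<bullet> x2"] lin[of d3] d3 by simp
  ultimately have "c x1 = 0 \<and> c x2 = 0 \<and> c x3 = 0"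
    by (smt (verit, ccfv_threshold) mult_le_0_iff vector_space_over_itself.scale_eq_0_iff)
  then show False
    using c(2) by auto
qed

lemma independent_image_if_scalars_zero:
  fixes \<phi> :: "'b \<Rightarrow> 'a::real_vector"
  assumes fin: "finite S" and zero: "\<And>c. (\<Sum>h\<in>S. c h *\<^sub>R \<phi> h) = 0 \<Longrightarrow> \<forall>h\<in>S. c h = 0"
  shows "inj_on \<phi> S" "independent (\<phi> ` S)"
proof -
  show inj: "inj_on \<phi> S"
  proof (rule inj_onI, rule ccontr)
    fix h1 h2
    assume h: "h1 \<in> S" "h2 \<in> S" "\<phi> h1 = \<phi> h2" "h1 \<noteq> h2"
    define c :: "'b \<Rightarrow> real" where "c h = (if h = h1 then 1 else if h = h2 then -1 else 0)" for h
    have "(\<Sum>h\<in>S. c h *\<^sub>R \<phi> h) = (\<Sum>h\<in>S. (if h = h1 then \<phi> h else 0) - (if h = h2 then \<phi> h else 0))"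
      by (intro sum.cong) (auto simp: c_def h(4))
    also have "\<dots> = 0"
      using fin h by (simp add: sum_subtractf)
    finally have "c h1 = 0"
      using zero[of c] h(1) by blast
    then show False
      by (simp add: c_def)
  qed
  show "independent (\<phi> ` S)"
  proof (rule independent_if_scalars_zero)
    fix f v
    assume "(\<Sum>v\<in>\<phi> ` S. f v *\<^sub>R v) = 0" "v \<in> \<phi> ` S"
    then show "f v = 0"
      using zero[of "f \<circ> \<phi>"] by (auto simp: sum.reindex[OF inj])
  qed (use fin in simp)
qed

lemma span_pair_Int_subset:
  fixes a b w e :: "'a::real_inner"
  assumes "a \<bullet> e = 0" "b \<bullet> e = 0" "w \<bullet> e \<noteq> 0" "a \<notin> span {b}"
  shows "span {a, w} \<inter> span {b, w} \<subseteq> span {w}"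
proof
  fix u
  assume "u \<in> span {a, w} \<inter> span {b, w}"
  then obtain \<alpha> \<alpha>' where "u - \<alpha> *\<^sub>R a \<in> span {w}" "u - \<alpha>' *\<^sub>R b \<in> span {w}"
    using span_breakdown_eq[of u a "{w}"] span_breakdown_eq[of u b "{w}"] by blast
  then obtain \<beta> \<beta>' where "u - \<alpha> *\<^sub>R a = \<beta> *\<^sub>R w" "u - \<alpha>' *\<^sub>R b = \<beta>' *\<^sub>R w"
    unfolding span_singleton by auto
  then have u: "u = \<alpha> *\<^sub>R a + \<beta> *\<^sub>R w" "u = \<alpha>' *\<^sub>R b + \<beta>' *\<^sub>R w"
    by (simp_all add: diff_eq_eq add.commute)
  then have "\<beta> * (w \<bullet> e) = \<beta>' * (w \<bullet> e)"
    using assms(1,2) by (metis add_0 inner_add_left inner_scaleR_left mult_zero_right)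
  then have "\<alpha> *\<^sub>R a = \<alpha>' *\<^sub>R b"
    using u assms(3) by simp
  then have "\<alpha> = 0"
    using assms(4) by (metis divideR_right span_base span_scale singletonI)
  then show "u \<in> span {w}"
    using u(1) by (simp add: span_base span_scale)
qed

lemma cross3_orthogonal_complement_span:
  fixes a b u :: "real^3"
  assumes "cross3 a b \<noteq> 0"
  shows "u - ((u \<bullet> cross3 a b) / (cross3 a b \<bullet> cross3 a b)) *\<^sub>R cross3 a b \<in> span {a, b}"
proof -
  define m where "m = cross3 a b"
  have "(m \<bullet> m) *\<^sub>R u = (cross3 u b \<bullet> m) *\<^sub>R a + (cross3 a u \<bullet> m) *\<^sub>R b + (u \<bullet> m) *\<^sub>R m"
    unfolding m_def vec_eq_iff forall_3
    by (simp add: cross3_def inner_vec_def sum_3 vector_def; algebra)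
  then have "inverse (m \<bullet> m) *\<^sub>R ((m \<bullet> m) *\<^sub>R u - (u \<bullet> m) *\<^sub>R m)
      = inverse (m \<bullet> m) *\<^sub>R ((cross3 u b \<bullet> m) *\<^sub>R a + (cross3 a u \<bullet> m) *\<^sub>R b)"
    by simp
  then have "u - ((u \<bullet> m) / (m \<bullet> m)) *\<^sub>R m
      = ((cross3 u b \<bullet> m) / (m \<bullet> m)) *\<^sub>R a + ((cross3 a u \<bullet> m) / (m \<bullet> m)) *\<^sub>R b"
    using assms unfolding m_def[symmetric]
    by (simp add: scaleR_diff_right scaleR_add_right divide_inverse_commute)
  then show ?thesis
    unfolding m_def[symmetric] by (simp add: span_add span_base span_scale)
qed

lemma cross3_ne_0_if_orthogonal:
  fixes n w e :: "real^3"
  assumes "n \<noteq> 0" "n \<bullet> e = 0" "w \<bullet> e \<noteq> 0"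
  shows "cross3 n w \<noteq> 0"
proof
  assume "cross3 n w = 0"
  then have "((n \<bullet> w) *\<^sub>R n - (n \<bullet> n) *\<^sub>R w) \<bullet> e = 0"
    using Lagrange[of n n w] by simp
  then show False
    using assms by (simp add: inner_diff_left)
qed

text \<open>For e = 0 the division yields 0, so reflect 0 is the identity; hence the first lemmas
  below need no hypothesis on e.\<close>

definition reflect :: "'a::real_inner \<Rightarrow> 'a \<Rightarrow> 'a" where
  "reflect e a = a - (2 * (a \<bullet> e) / (e \<bullet> e)) *\<^sub>R e"

lemma linear_reflect: "linear (reflect e)"
  by (rule linearI)
    (simp_all add: reflect_def add_divide_distrib algebra_simps)

lemma reflect_reflect [simp]: "reflect e (reflect e a) = a"
  by (cases "e = 0") (simp_all add: reflect_def algebra_simps)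

lemma reflect_eq_self_iff: "reflect e a = a \<longleftrightarrow> a \<bullet> e = 0"
  by (cases "e = 0") (auto simp: reflect_def)

lemma reflect_eq_0_iff [simp]: "reflect e a = 0 \<longleftrightarrow> a = 0"
  by (metis linear_0[OF linear_reflect] reflect_reflect)

lemma reflect_if_norm_eq_parallel:
  fixes a b e :: "'a::real_inner"
  assumes "norm a = norm b" "a \<noteq> b" "a - b = s *\<^sub>R e"
  shows "b = reflect e a"
proof -
  have "e \<noteq> 0" "s \<noteq> 0"
    using assms(2,3) by auto
  have "a \<bullet> a = b \<bullet> b"
    using assms(1) by (simp add: dot_square_norm)
  then have "(a + b) \<bullet> (a - b) = 0"
    by (simp add: algebra_simps inner_commute)
  then have "(a + b) \<bullet> e = 0"
    using assms(3) \<open>s \<noteq> 0\<close> by simp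
  then have "s = 2 * (a \<bullet> e) / (e \<bullet> e)"
    using assms(3) \<open>e \<noteq> 0\<close> by (simp add: inner_add_left field_simps)
  then show ?thesis
    using assms(3) unfolding reflect_def by (simp add: algebra_simps)
qed

lemma cross3_reflect:
  fixes n e a :: "real^3"
  assumes "n \<bullet> e = 0" "e \<noteq> 0"
  shows "cross3 n (reflect e a) = - reflect e (cross3 n a)"
proof -
  \<comment> \<open>expand n \<times> a in the orthogonal frame e, n \<times> e, n\<close>
  have "(e \<bullet> e) *\<^sub>R cross3 n a = (a \<bullet> e) *\<^sub>R cross3 n e + (cross3 n a \<bullet> e) *\<^sub>R e"
    using assms(1) unfolding vec_eq_iff forall_3
    by (simp add: cross3_def inner_vec_def sum_3 vector_def; algebra)
  then have "inverse (e \<bullet> e) *\<^sub>R ((e \<bullet> e) *\<^sub>R cross3 n a)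
      = inverse (e \<bullet> e) *\<^sub>R ((a \<bullet> e) *\<^sub>R cross3 n e + (cross3 n a \<bullet> e) *\<^sub>R e)"
    by simp
  moreover define \<alpha> \<beta> where "\<alpha> = (a \<bullet> e) / (e \<bullet> e)" and "\<beta> = (cross3 n a \<bullet> e) / (e \<bullet> e)"
  ultimately have frame: "cross3 n a = \<alpha> *\<^sub>R cross3 n e + \<beta> *\<^sub>R e"
    using assms(2) by (simp add: scaleR_add_right divide_inverse_commute)
  have "cross3 n (reflect e a) = cross3 n a - (2 * \<alpha>) *\<^sub>R cross3 n e"
    by (simp add: reflect_def \<alpha>_def Cross3.right_diff_distrib cross_mult_right)
  also have "\<dots> = - (cross3 n a - (2 * \<beta>) *\<^sub>R e)"
    by (subst (1 2) frame) (simp add: vec_eq_iff algebra_simps)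
  also have "\<dots> = - reflect e (cross3 n a)"
    by (simp add: reflect_def \<beta>_def)
  finally show ?thesis .
qed

lemma extreme_point_of_imp_mem: "x extreme_point_of S \<Longrightarrow> x \<in> S"
  by (simp add: extreme_point_of_def)

lemma extreme_point_not_in_closed_segment:
  assumes "x extreme_point_of S" "a \<in> S" "b \<in> S" "x \<noteq> a" "x \<noteq> b"
  shows "x \<notin> closed_segment a b"
  using assms unfolding extreme_point_of_def open_segment_def by blast

lemma polytope_finite_extreme_points:
  fixes K :: "'a::euclidean_space set"
  shows "polytope K \<Longrightarrow> finite {v. v extreme_point_of K}"
  by (simp add: finite_polyhedron_extreme_points polytope_imp_polyhedron)

lemma polytope_eq_convex_hull_extreme_points:
  fixes K :: "'a::euclidean_space set"
  shows "polytope K \<Longrightarrow> K = convex hull {v. v extreme_point_of K}"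
  by (simp add: Krein_Milman_Minkowski polytope_imp_compact polytope_imp_convex)

lemma polytope_le_if_le_on_extreme_points:
  fixes K :: "'a::euclidean_space set"
  assumes "polytope K" "\<And>v. v extreme_point_of K \<Longrightarrow> a \<bullet> v \<le> b" "y \<in> K"
  shows "a \<bullet> y \<le> b"
proof -
  have "K = convex hull {v. v extreme_point_of K}"
    using assms(1) by (rule polytope_eq_convex_hull_extreme_points)
  also have "\<dots> \<subseteq> {x. a \<bullet> x \<le> b}"
    using assms(2) by (intro hull_minimal) (auto simp: convex_halfspace_le)
  finally show ?thesis using assms(3) by blast
qed

lemma polytope_maximum_at_extreme_point:
  fixes K :: "'a::euclidean_space set"
  assumes "polytope K" "K \<noteq> {}"
  obtains p where "p extreme_point_of K" "\<And>y. y \<in> K \<Longrightarrow> u \<bullet> y \<le> u \<bullet> p"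
proof -
  define V where "V = {v. v extreme_point_of K}"
  have "finite V"
    using assms(1) polytope_finite_extreme_points unfolding V_def by blast
  moreover have "V \<noteq> {}"
    using assms extreme_point_exists_convex polytope_imp_compact polytope_imp_convex
    unfolding V_def by blast
  ultimately have "Max ((\<lambda>x. u \<bullet> x) ` V) \<in> (\<lambda>x. u \<bullet> x) ` V"
    by simp
  then obtain p where p: "p \<in> V" "u \<bullet> p = Max ((\<lambda>x. u \<bullet> x) ` V)"
    by auto
  have "u \<bullet> v \<le> u \<bullet> p" if "v extreme_point_of K" for v
    using p \<open>finite V\<close> that unfolding V_def by simp
  then show ?thesis
    using that p(1) polytope_le_if_le_on_extreme_points[OF assms(1)] unfolding V_def by blast
qed

lemma polytope_face_exposed:
  fixes K :: "'a::euclidean_space set"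
  assumes "polytope K" "F face_of K"
  obtains a b where "\<And>x. x \<in> K \<Longrightarrow> a \<bullet> x \<le> b" "F = K \<inter> {x. a \<bullet> x = b}"
  using assms exposed_face_of_polyhedron[of K F] polytope_imp_polyhedron
  unfolding exposed_face_of_def by blast

lemma proper_face_normal:
  fixes P F :: "'a::euclidean_space set"
  assumes "polytope P" "F face_of P" "F \<noteq> {}" "F \<noteq> P"
  obtains n b where "n \<noteq> 0" "\<And>x. x \<in> P \<Longrightarrow> n \<bullet> x \<le> b" "F = P \<inter> {x. n \<bullet> x = b}"
proof -
  obtain n b where nb: "\<And>x. x \<in> P \<Longrightarrow> n \<bullet> x \<le> b" "F = P \<inter> {x. n \<bullet> x = b}"
    using polytope_face_exposed[OF assms(1,2)] by blast
  moreover have "n \<noteq> 0"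
    using nb(2) assms(3,4) by (cases "b = 0") auto
  ultimately show ?thesis
    using that by blast
qed

lemma face_normals_not_parallel:
  fixes n n' :: "'a::real_inner"
  assumes "n \<noteq> 0" "F = P \<inter> {x. n \<bullet> x = b}" "G = P \<inter> {x. n' \<bullet> x = b'}"
    and "p \<in> F" "p \<in> G" "F \<noteq> G"
  shows "n \<notin> span {n'}"
proof
  assume "n \<in> span {n'}"
  then obtain k where k: "n = k *\<^sub>R n'"
    by (auto simp: span_singleton)
  then have "b = k * b'"
    using assms(2-5) by auto
  then have "F = G"
    using k assms(1-3) by auto
  then show False
    using assms(6) by blast
qed

lemma extreme_point_strictly_exposed:
  fixes K :: "'a::euclidean_space set"
  assumes "polytope K" "v extreme_point_of K"
  obtains a where "\<And>x. x \<in> K \<Longrightarrow> x \<noteq> v \<Longrightarrow> a \<bullet> x < a \<bullet> v"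
proof -
  obtain a b where "\<And>x. x \<in> K \<Longrightarrow> a \<bullet> x \<le> b" "{v} = K \<inter> {x. a \<bullet> x = b}"
    using polytope_face_exposed assms face_of_singleton by metis
  then show ?thesis
    using that by (metis (mono_tags, lifting) Int_Collect insertI1 order_less_le singletonD)
qed

lemma extreme_point_directions_independent:
  fixes K :: "'a::euclidean_space set"
  assumes K: "polytope K" and v: "v extreme_point_of K" and dim: "aff_dim K \<ge> 2"
  obtains u1 u2 where "u1 extreme_point_of K" "u2 extreme_point_of K" "u1 \<noteq> u2"
    "independent {u1 - v, u2 - v}"
proof -
  define V where "V = {x. x extreme_point_of K}"
  have "K = convex hull V"
    using polytope_eq_convex_hull_extreme_points[OF K] unfolding V_def .
  then have "aff_dim V = aff_dim K"
    by (metis aff_dim_convex_hull)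
  moreover have "v \<in> affine hull V"
    using v unfolding V_def by (intro hull_inc) simp
  ultimately have "dim ((+) (- v) ` V) \<ge> 2"
    using dim aff_dim_eq_dim[of v V] by linarith
  then obtain B where B: "B \<subseteq> (+) (- v) ` V" "independent B" "card B \<ge> 2"
    by (metis basis_exists)
  then obtain T where "T \<subseteq> B" "card T = 2"
    by (meson obtain_subset_with_card_n)
  then obtain x1 x2 where "x1 \<in> B" "x2 \<in> B" "x1 \<noteq> x2" "independent {x1, x2}"
    using B(2) by (metis card_2_iff independent_mono insert_subset)
  then show ?thesis
    using B(1) that unfolding V_def by (fastforce simp: algebra_simps)
qed

lemma extreme_points_on_both_sides:
  fixes K :: "'a::euclidean_space set"
  assumes "polytope K" "v extreme_point_of K" "aff_dim K \<ge> 2"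
  obtains b u1 u2 where "u1 extreme_point_of K" "u2 extreme_point_of K"
    "b \<bullet> v < b \<bullet> u1" "b \<bullet> u2 < b \<bullet> v"
proof -
  obtain u1 u2 where u: "u1 extreme_point_of K" "u2 extreme_point_of K" "u1 \<noteq> u2"
    "independent {u1 - v, u2 - v}"
    using extreme_point_directions_independent[OF assms] by blast
  moreover have "u1 - v \<noteq> u2 - v"
    using u(3) by simp
  ultimately obtain b where "b \<bullet> (u1 - v) > 0" "b \<bullet> (u2 - v) < 0"
    using inner_opposite_signs_if_independent by blast
  then show ?thesis
    using that u(1,2) by (simp add: inner_diff_right)
qed

lemma tilted_functional_reaches_improving_extreme_point:
  fixes K :: "'a::euclidean_space set"
  assumes K: "polytope K" and a: "\<And>x. x \<in> K \<Longrightarrow> x \<noteq> v \<Longrightarrow> a \<bullet> x < a \<bullet> v"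
    and u: "u extreme_point_of K" "c \<bullet> v < c \<bullet> u"
  obtains t w where "t > 0" "w extreme_point_of K" "c \<bullet> v < c \<bullet> w"
    "(a + t *\<^sub>R c) \<bullet> w = (a + t *\<^sub>R c) \<bullet> v"
    "\<And>x. x extreme_point_of K \<Longrightarrow> (a + t *\<^sub>R c) \<bullet> x \<le> (a + t *\<^sub>R c) \<bullet> v"
proof -
  \<comment> \<open>tilt a towards c until the supporting hyperplane at v reaches a vertex above v\<close>
  define U where "U = {x. x extreme_point_of K \<and> c \<bullet> v < c \<bullet> x}"
  define t where "t x = (a \<bullet> v - a \<bullet> x) / (c \<bullet> x - c \<bullet> v)" for x
  have "finite U"
    using polytope_finite_extreme_points[OF K] unfolding U_def by (auto elim: finite_subset)
  moreover have "u \<in> U"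
    using u unfolding U_def by simp
  ultimately have "Min (t ` U) \<in> t ` U" "\<And>x. x \<in> U \<Longrightarrow> Min (t ` U) \<le> t x"
    by (auto intro: Min_in)
  then obtain w where w: "w \<in> U" "\<And>x. x \<in> U \<Longrightarrow> t w \<le> t x"
    by (metis imageE)
  have w_ext: "w extreme_point_of K" and cw: "c \<bullet> v < c \<bullet> w"
    using w(1) unfolding U_def by auto
  have "t w > 0"
    using a[OF extreme_point_of_imp_mem[OF w_ext]] cw unfolding t_def by force
  have "(a + t w *\<^sub>R c) \<bullet> x \<le> (a + t w *\<^sub>R c) \<bullet> v" if "x extreme_point_of K" for x
  proof (cases "c \<bullet> v < c \<bullet> x")
    case True
    then have "t w * (c \<bullet> x - c \<bullet> v) \<le> a \<bullet> v - a \<bullet> x"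
      using w(2)[of x] that by (simp add: U_def t_def le_divide_eq)
    then show ?thesis by (simp add: algebra_simps)
  next
    case False
    then have "t w * (c \<bullet> x) \<le> t w * (c \<bullet> v)"
      using \<open>t w > 0\<close> by simp
    moreover have "a \<bullet> x \<le> a \<bullet> v"
      using a[OF extreme_point_of_imp_mem[OF that]] by fastforce
    ultimately show ?thesis by (simp add: inner_add_left)
  qed
  moreover have "(a + t w *\<^sub>R c) \<bullet> w = (a + t w *\<^sub>R c) \<bullet> v"
    using cw unfolding t_def by (simp add: inner_add_left field_simps)
  ultimately show ?thesis
    using that \<open>t w > 0\<close> w_ext cw by blast
qed

lemma proper_face_with_improving_extreme_point:
  fixes K :: "'a::euclidean_space set"
  assumes K: "polytope K" and v: "v extreme_point_of K"
    and u: "u extreme_point_of K" "c \<bullet> v < c \<bullet> u"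
    and u': "u' extreme_point_of K" "u' \<noteq> v" "c \<bullet> u' \<le> c \<bullet> v"
  obtains G w where "G face_of K" "G \<noteq> K" "v \<in> G" "w \<in> G" "w extreme_point_of K"
    "c \<bullet> v < c \<bullet> w"
proof -
  obtain a where a: "\<And>x. x \<in> K \<Longrightarrow> x \<noteq> v \<Longrightarrow> a \<bullet> x < a \<bullet> v"
    using extreme_point_strictly_exposed[OF K v] by blast
  obtain t w where tw: "t > 0" "w extreme_point_of K" "c \<bullet> v < c \<bullet> w"
    "(a + t *\<^sub>R c) \<bullet> w = (a + t *\<^sub>R c) \<bullet> v"
    "\<And>x. x extreme_point_of K \<Longrightarrow> (a + t *\<^sub>R c) \<bullet> x \<le> (a + t *\<^sub>R c) \<bullet> v"
    using tilted_functional_reaches_improving_extreme_point[OF K a u] by blast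
  define G where "G = K \<inter> {y. (a + t *\<^sub>R c) \<bullet> y = (a + t *\<^sub>R c) \<bullet> v}"
  have "G face_of K"
    unfolding G_def using K tw(5) polytope_le_if_le_on_extreme_points
    by (metis face_of_Int_supporting_hyperplane_le polytope_imp_convex)
  moreover have "(a + t *\<^sub>R c) \<bullet> u' < (a + t *\<^sub>R c) \<bullet> v"
    using a[OF extreme_point_of_imp_mem[OF u'(1)] u'(2)] u'(3) \<open>t > 0\<close>
    by (simp add: inner_add_left add_less_le_mono)
  then have "G \<noteq> K"
    using extreme_point_of_imp_mem[OF u'(1)] unfolding G_def by force
  ultimately show ?thesis
    using that[of G w] tw(2-4) extreme_point_of_imp_mem[OF v] extreme_point_of_imp_mem[OF tw(2)]
    unfolding G_def by blast
qed

section \<open>The edge graph of a polytope\<close>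

definition adjacent_vertices :: "'a::euclidean_space set \<Rightarrow> 'a \<Rightarrow> 'a \<Rightarrow> bool" where
  "adjacent_vertices K v w \<longleftrightarrow> v \<noteq> w \<and> closed_segment v w face_of K"

lemma adjacent_vertices_sym: "adjacent_vertices K v w \<Longrightarrow> adjacent_vertices K w v"
  by (auto simp: adjacent_vertices_def closed_segment_commute)

lemma adjacent_vertices_imp_extreme_point:
  assumes "adjacent_vertices K v w"
  shows "v extreme_point_of K" "w extreme_point_of K"
  using assms extreme_point_of_face[of "closed_segment v w" K]
  by (auto simp: adjacent_vertices_def extreme_point_of_segment)

lemma adjacent_vertices_face:
  "F face_of K \<Longrightarrow> adjacent_vertices F v w \<Longrightarrow> adjacent_vertices K v w"
  by (auto simp: adjacent_vertices_def intro: face_of_trans)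

lemma adjacent_vertices_exposed:
  fixes K :: "'a::euclidean_space set"
  assumes "polytope K" "adjacent_vertices K v w"
  obtains d where "\<And>y. y \<in> K \<Longrightarrow> d \<bullet> y \<le> d \<bullet> v" "d \<bullet> w = d \<bullet> v"
    "\<And>u. u extreme_point_of K \<Longrightarrow> u \<noteq> v \<Longrightarrow> u \<noteq> w \<Longrightarrow> d \<bullet> u < d \<bullet> v"
proof -
  obtain d b where d: "\<And>x. x \<in> K \<Longrightarrow> d \<bullet> x \<le> b" "closed_segment v w = K \<inter> {x. d \<bullet> x = b}"
    using assms polytope_face_exposed unfolding adjacent_vertices_def by metis
  have "d \<bullet> v = b" "d \<bullet> w = b"
    using d(2) ends_in_segment by blast+
  moreover have "d \<bullet> u < b" if "u extreme_point_of K" "u \<noteq> v" "u \<noteq> w" for u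
    using that d adjacent_vertices_imp_extreme_point[OF assms(2)]
      extreme_point_not_in_closed_segment[of u K v w]
    by (metis (mono_tags, lifting) IntI extreme_point_of_imp_mem mem_Collect_eq order_less_le)
  ultimately show ?thesis using that d(1) by auto
qed

lemma adjacent_vertices_if_aff_dim_le_1:
  fixes K :: "'a::euclidean_space set"
  assumes K: "polytope K" "aff_dim K \<le> 1" and "v extreme_point_of K" "u extreme_point_of K" "u \<noteq> v"
  shows "adjacent_vertices K v u"
proof -
  obtain p q where pq: "K = closed_segment p q"
    using compact_convex_collinear_segment[of K] K assms(3) collinear_aff_dim
    by (metis extreme_point_of_empty polytope_imp_compact polytope_imp_convex)
  moreover have "v \<in> {p, q}" "u \<in> {p, q}"
    using assms(3,4) extreme_point_of_segment unfolding pq by auto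
  ultimately have "K = closed_segment v u"
    using assms(5) by (auto simp: closed_segment_commute)
  then show ?thesis
    using assms(5) K(1) by (auto simp: adjacent_vertices_def face_of_refl polytope_imp_convex)
qed

lemma exists_improving_adjacent_vertex:
  fixes K :: "'a::euclidean_space set"
  assumes "polytope K" "v extreme_point_of K" "u extreme_point_of K" "c \<bullet> v < c \<bullet> u"
  shows "\<exists>w. adjacent_vertices K v w \<and> c \<bullet> v < c \<bullet> w"
  using assms
proof (induction "nat (aff_dim K)" arbitrary: K u c rule: less_induct)
  case less
  note K = less.prems(1) and v = less.prems(2)
  have improve: "\<exists>w. adjacent_vertices K v w \<and> c' \<bullet> v < c' \<bullet> w"
    if hyps: "u1 extreme_point_of K" "c' \<bullet> v < c' \<bullet> u1"
      "u2 extreme_point_of K" "u2 \<noteq> v" "c' \<bullet> u2 \<le> c' \<bullet> v" for c' u1 u2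
  proof -
    obtain G w where G: "G face_of K" "G \<noteq> K" "v \<in> G" "w \<in> G" "w extreme_point_of K"
      "c' \<bullet> v < c' \<bullet> w"
      using proper_face_with_improving_extreme_point[OF K v hyps] by blast
    have "aff_dim G < aff_dim K" "G \<noteq> {}"
      using G face_of_aff_dim_lt[OF polytope_imp_convex[OF K]] by auto
    then have "nat (aff_dim G) < nat (aff_dim K)"
      using aff_dim_negative_iff[of G] by linarith
    moreover have "v extreme_point_of G" "w extreme_point_of G"
      using G v extreme_point_of_face by blast+
    ultimately obtain w' where "adjacent_vertices G v w'" "c' \<bullet> v < c' \<bullet> w'"
      using less.hyps[of G] face_of_polytope_polytope[OF K G(1)] G(6) by blast
    then show ?thesis
      using adjacent_vertices_face[OF G(1)] by blast
  qed
  \<comment> \<open>if another vertex is not above v, recurse into a proper face; otherwise every edge at v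
    improves c, and one is found by the first case for a direction separating two vertices\<close>
  show ?case
  proof (cases "\<exists>u'. u' extreme_point_of K \<and> u' \<noteq> v \<and> c \<bullet> u' \<le> c \<bullet> v")
    case True
    then show ?thesis using improve less.prems(3,4) by blast
  next
    case False
    then have above: "c \<bullet> v < c \<bullet> x" if "x extreme_point_of K" "x \<noteq> v" for x
      using that by (meson not_le)
    show ?thesis
    proof (cases "aff_dim K \<le> 1")
      case True
      then show ?thesis
        using adjacent_vertices_if_aff_dim_le_1[OF K _ v less.prems(3)] less.prems(4) by auto
    next
      case False
      then have "aff_dim K \<ge> 2"
        by simp
      then obtain b u1 u2 where u: "u1 extreme_point_of K" "u2 extreme_point_of K"
        "b \<bullet> v < b \<bullet> u1" "b \<bullet> u2 < b \<bullet> v"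
        using extreme_points_on_both_sides[OF K v] by blast
      then have "u2 \<noteq> v"
        by auto
      then obtain w where "adjacent_vertices K v w"
        using improve[OF u(1,3,2)] u(4) by fastforce
      then show ?thesis
        using above adjacent_vertices_imp_extreme_point(2) adjacent_vertices_def by metis
    qed
  qed
qed

lemma polytope_vertices_connected:
  fixes K :: "'a::euclidean_space set"
  assumes K: "polytope K" and v: "v extreme_point_of K" and p: "p extreme_point_of K"
  shows "(adjacent_vertices K)\<^sup>*\<^sup>* v p"
proof -
  obtain c where c: "\<And>x. x \<in> K \<Longrightarrow> x \<noteq> p \<Longrightarrow> c \<bullet> x < c \<bullet> p"
    using extreme_point_strictly_exposed[OF K p] by blast
  have fin: "finite {x. x extreme_point_of K \<and> c \<bullet> v < c \<bullet> x}" for v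
    using polytope_finite_extreme_points[OF K] by (auto elim: finite_subset)
  show ?thesis
    using v
  proof (induction "card {x. x extreme_point_of K \<and> c \<bullet> v < c \<bullet> x}" arbitrary: v
      rule: less_induct)
    case (less v)
    show ?case
    proof (cases "v = p")
      case False
      then obtain w where w: "adjacent_vertices K v w" "c \<bullet> v < c \<bullet> w"
        using exists_improving_adjacent_vertex[OF K less.prems p]
          c[OF extreme_point_of_imp_mem[OF less.prems]] by blast
      have "{x. x extreme_point_of K \<and> c \<bullet> w < c \<bullet> x}
          \<subset> {x. x extreme_point_of K \<and> c \<bullet> v < c \<bullet> x}"
        using w adjacent_vertices_imp_extreme_point(2)[OF w(1)] by auto
      then have "(adjacent_vertices K)\<^sup>*\<^sup>* w p"
        using less.hyps psubset_card_mono[OF fin] adjacent_vertices_imp_extreme_point(2)[OF w(1)]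
        by blast
      then show ?thesis
        using w(1) by (meson converse_rtranclp_into_rtranclp)
    qed simp
  qed
qed

lemma polytope_vertices_propagate:
  fixes K :: "'a::euclidean_space set"
  assumes "polytope K" "p extreme_point_of K" "v extreme_point_of K" "Q p"
    and step: "\<And>x y. adjacent_vertices K x y \<Longrightarrow> Q x \<Longrightarrow> Q y"
  shows "Q v"
  using polytope_vertices_connected[OF assms(1,2,3)] \<open>Q p\<close>
  by (induction rule: rtranclp_induct) (auto intro: step)

lemma faces_common_edge:
  fixes P F G :: "'a::euclidean_space set"
  assumes P: "polytope P" and F: "F face_of P" and G: "G face_of P" and E: "aff_dim (F \<inter> G) = 1"
  obtains p q where "adjacent_vertices F p q" "adjacent_vertices G p q"
proof -
  have EP: "F \<inter> G face_of P"
    using face_of_Int[OF F G] .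
  then have "polytope (F \<inter> G)" "F \<inter> G \<noteq> {}" "collinear (F \<inter> G)"
    using face_of_polytope_polytope[OF P] E by (auto simp: collinear_aff_dim)
  then obtain p q where pq: "F \<inter> G = closed_segment p q"
    using compact_convex_collinear_segment polytope_imp_compact polytope_imp_convex by metis
  moreover have "p \<noteq> q"
    using E pq by auto
  moreover have "F \<inter> G face_of F" "F \<inter> G face_of G"
    using face_of_subset[OF EP] face_of_imp_subset[OF F] face_of_imp_subset[OF G] by blast+
  ultimately show ?thesis
    using that unfolding adjacent_vertices_def by auto
qed

lemma polygon_at_most_two_adjacent:
  fixes K :: "'a::euclidean_space set"
  assumes K: "polytope K" "aff_dim K = 2"
    and adj: "adjacent_vertices K v w1" "adjacent_vertices K v w2" "adjacent_vertices K v w3"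
    and distinct: "w1 \<noteq> w2" "w1 \<noteq> w3" "w2 \<noteq> w3"
  shows False
proof -
  have exposing: "\<exists>d. d \<bullet> (w - v) = 0 \<and> d \<bullet> (w' - v) < 0 \<and> d \<bullet> (w'' - v) < 0"
    if hyps: "adjacent_vertices K v w" "adjacent_vertices K v w'" "adjacent_vertices K v w''"
      "w' \<noteq> w" "w'' \<noteq> w" for w w' w''
  proof -
    obtain d where d: "\<And>y. y \<in> K \<Longrightarrow> d \<bullet> y \<le> d \<bullet> v" "d \<bullet> w = d \<bullet> v"
      "\<And>u. u extreme_point_of K \<Longrightarrow> u \<noteq> v \<Longrightarrow> u \<noteq> w \<Longrightarrow> d \<bullet> u < d \<bullet> v"
      using adjacent_vertices_exposed[OF K(1) hyps(1)] by blast
    have "w' extreme_point_of K" "w'' extreme_point_of K" "w' \<noteq> v" "w'' \<noteq> v"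
      using hyps(2,3) adjacent_vertices_imp_extreme_point(2) by (auto simp: adjacent_vertices_def)
    then show ?thesis
      using d(2,3) hyps(4,5) by (auto simp: inner_diff_right intro!: exI[of _ d])
  qed
  define x1 x2 x3 where "x1 = w1 - v" and "x2 = w2 - v" and "x3 = w3 - v"
  obtain d1 where d1: "d1 \<bullet> x1 = 0" "d1 \<bullet> x2 < 0" "d1 \<bullet> x3 < 0"
    using exposing[OF adj(1,2,3)] distinct unfolding x1_def x2_def x3_def by auto
  obtain d2 where d2: "d2 \<bullet> x2 = 0" "d2 \<bullet> x1 < 0" "d2 \<bullet> x3 < 0"
    using exposing[OF adj(2,1,3)] distinct unfolding x1_def x2_def x3_def by auto
  obtain d3 where d3: "d3 \<bullet> x3 = 0" "d3 \<bullet> x1 < 0" "d3 \<bullet> x2 < 0"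
    using exposing[OF adj(3,1,2)] distinct unfolding x1_def x2_def x3_def by auto
  have "v \<in> K"
    using adjacent_vertices_imp_extreme_point(1)[OF adj(1)] extreme_point_of_imp_mem by blast
  then have "dim ((+) (- v) ` K) = 2"
    using K(2) aff_dim_eq_dim[of v K] by (simp add: hull_inc)
  moreover have "{x1, x2, x3} \<subseteq> (+) (- v) ` K"
    using adj adjacent_vertices_imp_extreme_point(2) extreme_point_of_imp_mem
    unfolding x1_def x2_def x3_def by (force simp: image_iff)
  then have "card {x1, x2, x3} \<le> dim ((+) (- v) ` K)"
    using independent_card_le_dim independent_if_separating_functionals[OF d1 d2 d3] by blast
  moreover have "x1 \<noteq> x2" "x1 \<noteq> x3" "x2 \<noteq> x3"
    using d1 d2 by auto
  ultimately show False
    by simp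
qed

lemma polygon_two_adjacent_vertices:
  fixes K :: "'a::euclidean_space set"
  assumes K: "polytope K" "aff_dim K = 2" and v: "v extreme_point_of K"
  shows "card {w. adjacent_vertices K v w} = 2"
proof -
  obtain b u1 u2 where u: "u1 extreme_point_of K" "u2 extreme_point_of K"
    "b \<bullet> v < b \<bullet> u1" "b \<bullet> u2 < b \<bullet> v"
    using extreme_points_on_both_sides[OF K(1) v] K(2) by (metis order_refl)
  obtain w1 where w1: "adjacent_vertices K v w1" "b \<bullet> v < b \<bullet> w1"
    using exists_improving_adjacent_vertex[OF K(1) v u(1,3)] by blast
  obtain w2 where w2: "adjacent_vertices K v w2" "b \<bullet> w2 < b \<bullet> v"
    using exists_improving_adjacent_vertex[OF K(1) v u(2), of "- b"] u(4) by auto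
  from w1 w2 have w: "adjacent_vertices K v w1" "adjacent_vertices K v w2" "w1 \<noteq> w2"
    by auto
  then have "{w. adjacent_vertices K v w} = {w1, w2}"
    using polygon_at_most_two_adjacent[OF K w(1,2)] by blast
  then show ?thesis
    using w(3) by simp
qed

lemma polygon_has_edge:
  fixes K :: "'a::euclidean_space set"
  assumes "polytope K" "aff_dim K = 2"
  obtains p q where "adjacent_vertices K p q"
proof -
  have "K \<noteq> {}"
    using assms(2) by auto
  then obtain p where "p extreme_point_of K"
    using extreme_point_exists_convex polytope_imp_compact polytope_imp_convex assms(1) by blast
  then have "card {q. adjacent_vertices K p q} = 2"
    by (rule polygon_two_adjacent_vertices[OF assms])
  then show ?thesis
    using that by fastforce
qed

lemma bipartite_regular_graph_sides_card_eq:
  fixes E :: "'a \<Rightarrow> 'a \<Rightarrow> bool"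
  assumes fin: "finite V" and E_in: "\<And>x y. E x y \<Longrightarrow> y \<in> V" and sym: "\<And>x y. E x y \<Longrightarrow> E y x"
    and regular: "\<And>x. x \<in> V \<Longrightarrow> card {y. E x y} = d" and "d > 0"
    and bipartite: "\<And>x y. E x y \<Longrightarrow> x \<in> A \<longleftrightarrow> y \<notin> A"
  shows "card (V \<inter> A) = card (V - A)"
proof -
  have sym_iff: "E x y \<longleftrightarrow> E y x" for x y
    using sym by blast
  have from_A: "{y. E x y} = {y \<in> V - A. E x y}" if "x \<in> A" for x
    using that E_in bipartite by auto
  have from_not_A: "{x. E y x} = {x \<in> V \<inter> A. E y x}" if "y \<notin> A" for y
    using that E_in bipartite by auto
  have "d * card (V \<inter> A) = (\<Sum>x\<in>V \<inter> A. card {y. E x y})"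
    using regular by simp
  also have "\<dots> = (\<Sum>x\<in>V \<inter> A. card {y \<in> V - A. E x y})"
    using from_A by simp
  also have "\<dots> = (\<Sum>x\<in>V \<inter> A. \<Sum>y\<in>V - A. if E x y then 1 else 0)"
    using fin by (simp add: sum.inter_filter[symmetric])
  also have "\<dots> = (\<Sum>y\<in>V - A. \<Sum>x\<in>V \<inter> A. if E y x then 1 else 0)"
    using sym_iff by (subst sum.swap) simp
  also have "\<dots> = (\<Sum>y\<in>V - A. card {x \<in> V \<inter> A. E y x})"
    using fin by (simp add: sum.inter_filter[symmetric])
  also have "\<dots> = (\<Sum>y\<in>V - A. card {x. E y x})"
    using from_not_A by simp
  also have "\<dots> = d * card (V - A)"
    using regular by simp
  finally show ?thesis
    using \<open>d > 0\<close> by simp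
qed

lemma odd_polygon_not_two_colourable:
  fixes K :: "'a::euclidean_space set"
  assumes K: "polytope K" "aff_dim K = 2" and odd: "odd (card {v. v extreme_point_of K})"
    and colouring: "\<And>v w. adjacent_vertices K v w \<Longrightarrow> v \<in> A \<longleftrightarrow> w \<notin> A"
  shows False
proof -
  define V where "V = {v. v extreme_point_of K}"
  have "finite V"
    using polytope_finite_extreme_points[OF K(1)] unfolding V_def .
  moreover have "card (V \<inter> A) = card (V - A)"
  proof (rule bipartite_regular_graph_sides_card_eq[where E = "adjacent_vertices K" and d = 2])
    show "y \<in> V" if "adjacent_vertices K x y" for x y
      using adjacent_vertices_imp_extreme_point(2)[OF that] unfolding V_def by simp
    show "card {y. adjacent_vertices K x y} = 2" if "x \<in> V" for x
      using polygon_two_adjacent_vertices[OF K] that unfolding V_def by simp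
  qed (use \<open>finite V\<close> adjacent_vertices_sym colouring in auto)
  ultimately have "card V = 2 * card (V \<inter> A)"
    by (metis card_Int_Diff mult_2)
  then show False
    using odd unfolding V_def by simp
qed

section \<open>Vertices of polytopes with the same normal fan\<close>

lemma normal_cone_singleton: "normal_cone P {p} = {c. \<forall>y\<in>P. c \<bullet> y \<le> c \<bullet> p}"
  by (simp add: normal_cone_def)

lemma finite_positive_lower_bound:
  fixes f :: "'a \<Rightarrow> real"
  assumes "finite U" "\<And>u. u \<in> U \<Longrightarrow> f u > 0"
  obtains \<delta> where "\<delta> > 0" "\<And>u. u \<in> U \<Longrightarrow> \<delta> \<le> f u"
proof (cases "U = {}")
  case False
  then show ?thesis
    using that[of "Min (f ` U)"] assms by simp
qed (use that[of 1] in simp)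

lemma normal_cone_extreme_point_contains_ball:
  fixes P :: "(real^3) set"
  assumes P: "polytope P" and p: "p extreme_point_of P"
  obtains c \<delta> where "\<delta> > 0" "ball c \<delta> \<subseteq> normal_cone P {p}"
proof -
  obtain a where a: "\<And>x. x \<in> P \<Longrightarrow> x \<noteq> p \<Longrightarrow> a \<bullet> x < a \<bullet> p"
    using extreme_point_strictly_exposed[OF P p] by blast
  define U where "U = {u. u extreme_point_of P} - {p}"
  obtain \<delta> where \<delta>: "\<delta> > 0" "\<And>u. u \<in> U \<Longrightarrow> \<delta> \<le> a \<bullet> (p - u) / norm (p - u)"
  proof (rule finite_positive_lower_bound)
    show "finite U"
      using polytope_finite_extreme_points[OF P] unfolding U_def by simp
    show "a \<bullet> (p - u) / norm (p - u) > 0" if "u \<in> U" for u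
    proof -
      have "u \<in> P" "u \<noteq> p"
        using that extreme_point_of_imp_mem unfolding U_def by auto
      then show ?thesis
        using a[of u] by (simp add: inner_diff_right)
    qed
  qed blast
  have "c \<in> normal_cone P {p}" if "c \<in> ball a \<delta>" for c
  proof -
    have "c \<bullet> u \<le> c \<bullet> p" if "u \<in> U" for u
    proof -
      have "\<bar>(c - a) \<bullet> (p - u)\<bar> \<le> norm (c - a) * norm (p - u)"
        by (rule Cauchy_Schwarz_ineq2)
      also have "\<dots> \<le> \<delta> * norm (p - u)"
        using \<open>c \<in> ball a \<delta>\<close> by (simp add: dist_norm norm_minus_commute mult_right_mono)
      also have "\<dots> \<le> a \<bullet> (p - u)"
        using \<delta>(2)[OF that] that unfolding U_def by (auto simp: le_divide_eq)
      finally show ?thesis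
        by (simp add: inner_diff_left inner_diff_right)
    qed
    then have "c \<bullet> y \<le> c \<bullet> p" if "y \<in> P" for y
      using polytope_le_if_le_on_extreme_points[OF P _ that] unfolding U_def by fastforce
    then show ?thesis
      by (simp add: normal_cone_def)
  qed
  then show ?thesis
    using that \<delta>(1) by blast
qed

lemma normal_fan_eq_imp_corresponding_vertex:
  fixes P Q :: "(real^3) set"
  assumes P: "polytope P" and fan: "normal_fan Q = normal_fan P" and p: "p extreme_point_of P"
  shows "\<exists>w. w extreme_point_of Q \<and> normal_cone Q {w} = normal_cone P {p}"
proof -
  have "{p} face_of P"
    using p face_of_singleton by blast
  then have "normal_cone P {p} \<in> normal_fan P"
    unfolding normal_fan_def by (intro CollectI exI[of _ "{p}"]) simp
  then have "normal_cone P {p} \<in> normal_fan Q"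
    using fan by simp
  then have "\<exists>G. normal_cone P {p} = normal_cone Q G \<and> G face_of Q \<and> G \<noteq> {}"
    by (simp add: normal_fan_def)
  then obtain G where G: "G face_of Q" "G \<noteq> {}" "normal_cone Q G = normal_cone P {p}"
    by auto
  obtain c \<delta> where c: "\<delta> > 0" "ball c \<delta> \<subseteq> normal_cone P {p}"
    using normal_cone_extreme_point_contains_ball[OF P p] by blast
  \<comment> \<open>every functional in the ball is maximized on all of G, so G cannot have two points\<close>
  have "x = y" if "x \<in> G" "y \<in> G" for x y
  proof -
    have "u \<bullet> (x - y) = 0" if "u \<in> ball c \<delta>" for u
    proof -
      have "u \<in> normal_cone Q G"
        using c(2) that G(3) by auto
      then have "u \<bullet> y \<le> u \<bullet> x" "u \<bullet> x \<le> u \<bullet> y"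
        using \<open>x \<in> G\<close> \<open>y \<in> G\<close> face_of_imp_subset[OF G(1)] unfolding normal_cone_def by auto
      then show ?thesis
        by (simp add: inner_diff_right)
    qed
    then have "x - y = 0"
      by (rule orthogonal_to_ball_imp_zero[OF c(1)])
    then show ?thesis
      by simp
  qed
  moreover obtain w where "w \<in> G"
    using G(2) by blast
  ultimately have "G = {w}"
    by blast
  then show ?thesis
    using G(1,3) face_of_singleton[of w Q] by auto
qed

definition corresponding_vertex :: "(real^3) set \<Rightarrow> (real^3) set \<Rightarrow> real^3 \<Rightarrow> real^3" where
  "corresponding_vertex Q P p =
    (SOME w. w extreme_point_of Q \<and> normal_cone Q {w} = normal_cone P {p})"

lemma corresponding_vertex:
  fixes P Q :: "(real^3) set"
  assumes "polytope P" "normal_fan Q = normal_fan P" "p extreme_point_of P"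
  shows "corresponding_vertex Q P p extreme_point_of Q"
    "normal_cone Q {corresponding_vertex Q P p} = normal_cone P {p}"
proof -
  have "corresponding_vertex Q P p extreme_point_of Q
      \<and> normal_cone Q {corresponding_vertex Q P p} = normal_cone P {p}"
    unfolding corresponding_vertex_def
    by (rule someI_ex[OF normal_fan_eq_imp_corresponding_vertex[OF assms]])
  then show "corresponding_vertex Q P p extreme_point_of Q"
    "normal_cone Q {corresponding_vertex Q P p} = normal_cone P {p}"
    by simp_all
qed

lemma support_fun_at_corresponding_vertex:
  fixes P Q :: "(real^3) set"
  assumes P: "polytope P" and fan: "normal_fan Q = normal_fan P" and p: "p extreme_point_of P"
    and u: "u \<in> normal_cone P {p}"
  shows "support_fun Q u = u \<bullet> corresponding_vertex Q P p"
proof -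
  have "corresponding_vertex Q P p \<in> Q"
    using corresponding_vertex(1)[OF assms(1-3)] extreme_point_of_imp_mem by blast
  moreover have "u \<in> normal_cone Q {corresponding_vertex Q P p}"
    using corresponding_vertex(2)[OF assms(1-3)] u by simp
  ultimately show ?thesis
    unfolding support_fun_def by (intro cSup_eq_maximum) (auto simp: normal_cone_def)
qed

lemma corresponding_vertex_inj:
  fixes P Q :: "(real^3) set"
  assumes P: "polytope P" and fan: "normal_fan Q = normal_fan P"
    and p: "p extreme_point_of P" and q: "q extreme_point_of P" and "p \<noteq> q"
  shows "corresponding_vertex Q P p \<noteq> corresponding_vertex Q P q"
proof
  assume "corresponding_vertex Q P p = corresponding_vertex Q P q"
  then have cones: "normal_cone P {p} = normal_cone P {q}"
    using corresponding_vertex(2)[OF P fan p] corresponding_vertex(2)[OF P fan q] by simp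
  obtain c where c: "\<And>x. x \<in> P \<Longrightarrow> x \<noteq> p \<Longrightarrow> c \<bullet> x < c \<bullet> p"
    using extreme_point_strictly_exposed[OF P p] by blast
  then have "c \<in> normal_cone P {p}"
    unfolding normal_cone_def by (force intro: less_imp_le)
  then have "c \<in> normal_cone P {q}"
    using cones by simp
  then show False
    using c[of q] \<open>p \<noteq> q\<close> p q extreme_point_of_imp_mem unfolding normal_cone_def by fastforce
qed

lemma adjacent_vertices_common_normals:
  fixes P :: "(real^3) set"
  assumes P: "polytope P" and pq: "adjacent_vertices P p q" and z: "z \<bullet> p = z \<bullet> q"
  obtains a \<delta> where "\<delta> > 0" "a \<in> normal_cone P {p}" "a \<in> normal_cone P {q}"
    "a + \<delta> *\<^sub>R z \<in> normal_cone P {p}" "a + \<delta> *\<^sub>R z \<in> normal_cone P {q}"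
proof -
  obtain a where a: "\<And>y. y \<in> P \<Longrightarrow> a \<bullet> y \<le> a \<bullet> p" "a \<bullet> q = a \<bullet> p"
    "\<And>u. u extreme_point_of P \<Longrightarrow> u \<noteq> p \<Longrightarrow> u \<noteq> q \<Longrightarrow> a \<bullet> u < a \<bullet> p"
    using adjacent_vertices_exposed[OF P pq] by blast
  define U where "U = {u. u extreme_point_of P \<and> u \<noteq> p \<and> u \<noteq> q}"
  define f where "f u = (a \<bullet> p - a \<bullet> u) / (\<bar>z \<bullet> (u - p)\<bar> + 1)" for u
  obtain \<delta> where \<delta>: "\<delta> > 0" "\<And>u. u \<in> U \<Longrightarrow> \<delta> \<le> f u"
  proof (rule finite_positive_lower_bound)
    show "finite U"
      using polytope_finite_extreme_points[OF P] unfolding U_def by (auto elim: finite_subset)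
    show "f u > 0" if "u \<in> U" for u
      using a(3) that unfolding U_def f_def by (simp add: add_pos_nonneg)
  qed blast
  have "(a + \<delta> *\<^sub>R z) \<bullet> u \<le> (a + \<delta> *\<^sub>R z) \<bullet> p" if "u extreme_point_of P" for u
  proof (cases "u \<in> U")
    case True
    define k where "k = z \<bullet> (u - p)"
    have "a \<bullet> u < a \<bullet> p"
      using a(3) True unfolding U_def by blast
    have "\<delta> * k \<le> \<delta> * \<bar>k\<bar>"
      using \<delta>(1) by (simp add: mult_left_mono)
    also have "\<dots> \<le> f u * \<bar>k\<bar>"
      using \<delta>(2)[OF True] by (simp add: mult_right_mono)
    also have "\<dots> = (a \<bullet> p - a \<bullet> u) * (\<bar>k\<bar> / (\<bar>k\<bar> + 1))"
      by (simp add: f_def k_def)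
    also have "\<dots> \<le> (a \<bullet> p - a \<bullet> u) * 1"
      using \<open>a \<bullet> u < a \<bullet> p\<close> by (intro mult_left_mono) auto
    finally show ?thesis
      by (simp add: k_def algebra_simps)
  next
    case False
    then have "u = p \<or> u = q"
      using that unfolding U_def by blast
    then show ?thesis
      using a(2) z by (auto simp: inner_add_left)
  qed
  then have "a + \<delta> *\<^sub>R z \<in> normal_cone P {p}"
    using polytope_le_if_le_on_extreme_points[OF P] by (auto simp: normal_cone_singleton)
  moreover have "a \<in> normal_cone P {p}"
    using a(1) by (simp add: normal_cone_singleton)
  ultimately show ?thesis
    using that \<delta>(1) a(2) z by (simp add: normal_cone_singleton inner_add_left)
qed

lemma corresponding_vertices_edge_orthogonal:
  fixes P Q :: "(real^3) set"
  assumes P: "polytope P" and fan: "normal_fan Q = normal_fan P"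
    and pq: "adjacent_vertices P p q" and z: "z \<bullet> (p - q) = 0"
  shows "z \<bullet> (corresponding_vertex Q P p - corresponding_vertex Q P q) = 0"
proof -
  note p = adjacent_vertices_imp_extreme_point(1)[OF pq]
    and q = adjacent_vertices_imp_extreme_point(2)[OF pq]
  have "z \<bullet> p = z \<bullet> q"
    using z by (simp add: inner_diff_right)
  then obtain a \<delta> where a: "\<delta> > 0" "a \<in> normal_cone P {p}" "a \<in> normal_cone P {q}"
    "a + \<delta> *\<^sub>R z \<in> normal_cone P {p}" "a + \<delta> *\<^sub>R z \<in> normal_cone P {q}"
    using adjacent_vertices_common_normals[OF P pq] by blast
  have "c \<bullet> corresponding_vertex Q P p = c \<bullet> corresponding_vertex Q P q"
    if "c \<in> normal_cone P {p}" "c \<in> normal_cone P {q}" for c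
    using support_fun_at_corresponding_vertex[OF P fan p that(1)]
      support_fun_at_corresponding_vertex[OF P fan q that(2)] by simp
  from this[OF a(2,3)] this[OF a(4,5)] have "\<delta> * (z \<bullet> corresponding_vertex Q P p) = \<delta> * (z \<bullet> corresponding_vertex Q P q)"
    by (simp add: inner_add_left)
  then show ?thesis
    using a(1) by (simp add: inner_diff_right)
qed

lemma corresponding_vertex_reflect:
  fixes P Q :: "(real^3) set"
  assumes P: "polytope P" and Q: "Q \<in> InCone P" and pq: "adjacent_vertices P p q"
  shows "corresponding_vertex Q P q = reflect (p - q) (corresponding_vertex Q P p)"
proof (rule reflect_if_norm_eq_parallel)
  have fan: "normal_fan Q = normal_fan P"
    using Q unfolding InCone_def by blast
  note p = adjacent_vertices_imp_extreme_point(1)[OF pq]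
    and q = adjacent_vertices_imp_extreme_point(2)[OF pq]
  obtain r where "\<And>v. v extreme_point_of Q \<Longrightarrow> norm v = r"
    using Q unfolding InCone_def by blast
  then show "norm (corresponding_vertex Q P p) = norm (corresponding_vertex Q P q)"
    using corresponding_vertex(1)[OF P fan p] corresponding_vertex(1)[OF P fan q] by simp
  show "corresponding_vertex Q P p \<noteq> corresponding_vertex Q P q"
    using corresponding_vertex_inj[OF P fan p q] pq unfolding adjacent_vertices_def by blast
  have "p - q \<noteq> 0"
    using pq unfolding adjacent_vertices_def by simp
  then show "corresponding_vertex Q P p - corresponding_vertex Q P q
      = (((corresponding_vertex Q P p - corresponding_vertex Q P q) \<bullet> (p - q)) / ((p - q) \<bullet> (p - q)))
        *\<^sub>R (p - q)"
    using corresponding_vertices_edge_orthogonal[OF P fan pq] by (rule parallel_if_orthogonal)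
qed

lemma corresponding_vertex_inner_edge_ne_0:
  fixes P Q :: "(real^3) set"
  assumes P: "polytope P" and Q: "Q \<in> InCone P" and pq: "adjacent_vertices P p q"
  shows "corresponding_vertex Q P p \<bullet> (p - q) \<noteq> 0"
proof
  assume "corresponding_vertex Q P p \<bullet> (p - q) = 0"
  then have "corresponding_vertex Q P q = corresponding_vertex Q P p"
    using corresponding_vertex_reflect[OF P Q pq] by (simp add: reflect_eq_self_iff)
  moreover have "normal_fan Q = normal_fan P"
    using Q unfolding InCone_def by blast
  ultimately show False
    using corresponding_vertex_inj[OF P _ adjacent_vertices_imp_extreme_point[OF pq]] pq
    unfolding adjacent_vertices_def by metis
qed

section \<open>Reflection labellings\<close>

definition reflection_labellings :: "'a::euclidean_space set \<Rightarrow> ('a \<Rightarrow> 'a) set" where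
  "reflection_labellings K =
    {x. \<forall>p q. adjacent_vertices K p q \<longrightarrow> x q = reflect (p - q) (x p)}"

lemma reflection_labellingsD:
  "x \<in> reflection_labellings K \<Longrightarrow> adjacent_vertices K p q \<Longrightarrow> x q = reflect (p - q) (x p)"
  by (simp add: reflection_labellings_def)

lemma reflection_labellings_face:
  "F face_of K \<Longrightarrow> x \<in> reflection_labellings K \<Longrightarrow> x \<in> reflection_labellings F"
  by (simp add: reflection_labellings_def adjacent_vertices_face)

lemma reflection_labellings_lincomb:
  assumes "\<And>h. h \<in> S \<Longrightarrow> X h \<in> reflection_labellings K"
  shows "(\<lambda>p. \<Sum>h\<in>S. c h *\<^sub>R X h p) \<in> reflection_labellings K"
  using assms
  by (simp add: reflection_labellings_def linear_sum[OF linear_reflect] linear_cmul[OF linear_reflect])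

lemma const_reflection_labelling:
  assumes "\<And>u v. u \<in> K \<Longrightarrow> v \<in> K \<Longrightarrow> n \<bullet> u = n \<bullet> v"
  shows "(\<lambda>_. n) \<in> reflection_labellings K"
proof -
  have "reflect (p - q) n = n" if "adjacent_vertices K p q" for p q
  proof -
    have "p \<in> K" "q \<in> K"
      using adjacent_vertices_imp_extreme_point[OF that] by (simp_all add: extreme_point_of_imp_mem)
    then show ?thesis
      using assms[of p q] by (simp add: reflect_eq_self_iff inner_diff_right)
  qed
  then show ?thesis
    by (simp add: reflection_labellings_def)
qed

lemma subspace_reflection_labelling_values:
  "subspace {x p0 | x. x \<in> reflection_labellings K}"
  unfolding subspace_def
proof (intro conjI ballI allI)
  show "0 \<in> {x p0 | x. x \<in> reflection_labellings K}"
    using const_reflection_labelling[of K 0] by force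
  fix u v and c :: real
  assume "u \<in> {x p0 | x. x \<in> reflection_labellings K}" "v \<in> {x p0 | x. x \<in> reflection_labellings K}"
  then obtain x y where "u = x p0" "v = y p0" "x \<in> reflection_labellings K" "y \<in> reflection_labellings K"
    by blast
  moreover have "(\<lambda>p. x p + y p) \<in> reflection_labellings K" "(\<lambda>p. c *\<^sub>R x p) \<in> reflection_labellings K"
    using calculation(3,4)
    by (simp_all add: reflection_labellings_def linear_add[OF linear_reflect] linear_cmul[OF linear_reflect])
  ultimately show "u + v \<in> {x p0 | x. x \<in> reflection_labellings K}"
    "c *\<^sub>R u \<in> {x p0 | x. x \<in> reflection_labellings K}"
    by force+
qed

lemma reflection_labelling_eq_0:
  fixes K :: "'a::euclidean_space set"
  assumes "polytope K" "x \<in> reflection_labellings K" "p0 extreme_point_of K" "x p0 = 0"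
    "v extreme_point_of K"
  shows "x v = 0"
  using polytope_vertices_propagate[OF assms(1,3,5), of "\<lambda>v. x v = 0"] assms(2,4)
  by (simp add: reflection_labellings_def linear_0[OF linear_reflect])

lemma corresponding_vertex_reflection_labelling:
  fixes P Q :: "(real^3) set"
  shows "polytope P \<Longrightarrow> Q \<in> InCone P \<Longrightarrow> corresponding_vertex Q P \<in> reflection_labellings P"
  by (simp add: reflection_labellings_def corresponding_vertex_reflect)

lemma support_fun_lincomb_eq_0:
  fixes P :: "(real^3) set" and Q :: "'b \<Rightarrow> (real^3) set"
  assumes P: "polytope P" and p0: "p0 extreme_point_of P" and Q: "\<And>h. h \<in> S \<Longrightarrow> Q h \<in> InCone P"
    and c: "(\<Sum>h\<in>S. c h *\<^sub>R corresponding_vertex (Q h) P p0) = 0"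
  shows "(\<Sum>h\<in>S. c h * support_fun (Q h) u) = 0"
proof -
  \<comment> \<open>the relation at p0 propagates along the edges to every vertex\<close>
  define X where "X p = (\<Sum>h\<in>S. c h *\<^sub>R corresponding_vertex (Q h) P p)" for p
  have X: "X \<in> reflection_labellings P"
    unfolding X_def using corresponding_vertex_reflection_labelling[OF P] Q
    by (intro reflection_labellings_lincomb) blast
  obtain p where p: "p extreme_point_of P" "\<And>y. y \<in> P \<Longrightarrow> u \<bullet> y \<le> u \<bullet> p"
    using polytope_maximum_at_extreme_point[OF P] p0 extreme_point_of_imp_mem by blast
  then have "u \<in> normal_cone P {p}"
    by (simp add: normal_cone_singleton)
  then have "support_fun (Q h) u = u \<bullet> corresponding_vertex (Q h) P p" if "h \<in> S" for h
    using support_fun_at_corresponding_vertex[OF P _ p(1)] Q[OF that] unfolding InCone_def by blast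
  then have "(\<Sum>h\<in>S. c h * support_fun (Q h) u) = u \<bullet> X p"
    by (simp add: X_def inner_sum_right)
  also have "X p = 0"
    using reflection_labelling_eq_0[OF P X p0 _ p(1)] c unfolding X_def by blast
  finally show ?thesis
    by simp
qed

lemma card_support_functions_le_dim:
  fixes P :: "(real^3) set"
  assumes P: "polytope P" and p0: "p0 extreme_point_of P"
    and S: "S \<subseteq> support_fun ` InCone P" "lin_indep_funs S"
  shows "card S \<le> dim {x p0 | x. x \<in> reflection_labellings P}"
proof -
  have "\<forall>h\<in>S. \<exists>Q. Q \<in> InCone P \<and> support_fun Q = h"
    using S(1) by (auto simp: subset_iff image_iff)
  then obtain Q where Q: "\<And>h. h \<in> S \<Longrightarrow> Q h \<in> InCone P" "\<And>h. h \<in> S \<Longrightarrow> support_fun (Q h) = h"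
    by metis
  define W where "W h = corresponding_vertex (Q h) P p0" for h
  have relation: "\<forall>h\<in>S. c h = 0" if "(\<Sum>h\<in>S. c h *\<^sub>R W h) = 0" for c
  proof -
    have "(\<Sum>h\<in>S. c h * h u) = 0" for u
      using support_fun_lincomb_eq_0[OF P p0 Q(1), where c = c and u = u] that Q(2)
      unfolding W_def by simp
    then show ?thesis
      using S(2) unfolding lin_indep_funs_def by blast
  qed
  have "finite S"
    using S(2) unfolding lin_indep_funs_def by blast
  have "card S = card (W ` S)"
    using card_image[OF independent_image_if_scalars_zero(1)[of S W, OF \<open>finite S\<close> relation]] by simp
  also have "\<dots> \<le> dim {x p0 | x. x \<in> reflection_labellings P}"
    using corresponding_vertex_reflection_labelling[OF P] Q(1)
      independent_image_if_scalars_zero(2)[of S W, OF \<open>finite S\<close> relation]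
    unfolding W_def by (intro independent_card_le_dim) blast+
  finally show ?thesis .
qed

lemma incone_card_set_bounded:
  fixes P :: "(real^3) set"
  assumes "polytope P" "p0 extreme_point_of P"
  shows "{card S | S. S \<subseteq> support_fun ` InCone P \<and> lin_indep_funs S}
    \<subseteq> {..dim {x p0 | x. x \<in> reflection_labellings P}}"
  using card_support_functions_le_dim[OF assms] by auto

lemma incone_dim_le_dim:
  fixes P :: "(real^3) set"
  assumes "polytope P" "p0 extreme_point_of P"
  shows "incone_dim P \<le> dim {x p0 | x. x \<in> reflection_labellings P}"
proof -
  define M where "M = {card S | S. S \<subseteq> support_fun ` InCone P \<and> lin_indep_funs S}"
  have bounded: "M \<subseteq> {..dim {x p0 | x. x \<in> reflection_labellings P}}"
    using incone_card_set_bounded[OF assms] unfolding M_def .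
  have "card {} \<in> M"
    unfolding M_def by (intro CollectI exI[of _ "{}"]) (simp add: lin_indep_funs_def)
  then have "Max M \<le> dim {x p0 | x. x \<in> reflection_labellings P}"
    using bounded by (intro Max.boundedI) (auto intro: finite_subset)
  then show ?thesis
    unfolding incone_dim_def M_def .
qed

lemma card_le_incone_dim:
  fixes P :: "(real^3) set"
  assumes "polytope P" "p0 extreme_point_of P"
    and "S \<subseteq> support_fun ` InCone P" "lin_indep_funs S"
  shows "card S \<le> incone_dim P"
  unfolding incone_dim_def
  using finite_subset[OF incone_card_set_bounded[OF assms(1,2)]] assms(3,4)
  by (intro Max_ge) auto

lemma one_le_incone_dim:
  fixes P :: "(real^3) set"
  assumes P: "polytope P" and p: "p extreme_point_of P" and Q: "Q \<in> InCone P"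
  shows "1 \<le> incone_dim P"
proof -
  have fan: "normal_fan Q = normal_fan P"
    using Q unfolding InCone_def by blast
  obtain r where r: "r > 0" "\<And>v. v extreme_point_of Q \<Longrightarrow> norm v = r"
    using Q unfolding InCone_def by blast
  obtain c \<delta> where c: "\<delta> > 0" "ball c \<delta> \<subseteq> normal_cone P {p}"
    using normal_cone_extreme_point_contains_ball[OF P p] by blast
  have "corresponding_vertex Q P p \<noteq> 0"
    using r corresponding_vertex(1)[OF P fan p] by force
  then obtain u where "u \<in> ball c \<delta>" "u \<bullet> corresponding_vertex Q P p \<noteq> 0"
    using orthogonal_to_ball_imp_zero[OF c(1)] by blast
  then have "support_fun Q u \<noteq> 0"
    using support_fun_at_corresponding_vertex[OF P fan p] c(2) by auto
  then have "lin_indep_funs {support_fun Q}"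
    unfolding lin_indep_funs_def by auto
  then show ?thesis
    using card_le_incone_dim[OF P p, of "{support_fun Q}"] Q by simp
qed

section \<open>Odd facets\<close>

lemma odd_polygon_labelling_ne_antilabelling:
  fixes K :: "'a::euclidean_space set"
  assumes K: "polytope K" "aff_dim K = 2" and odd: "odd (card {v. v extreme_point_of K})"
    and y: "y \<in> reflection_labellings K"
    and m_step: "\<And>p q. adjacent_vertices K p q \<Longrightarrow> m q = - reflect (p - q) (m p)"
    and p0: "p0 extreme_point_of K" and "m p0 \<noteq> 0"
  shows "y p0 \<noteq> m p0"
proof
  assume "y p0 = m p0"
  note y_step = reflection_labellingsD[OF y]
  \<comment> \<open>then y = m and y = - m alternate along the edges, a 2-colouring of an odd cycle\<close>
  have invariant: "(y v = m v \<or> y v = - m v) \<and> m v \<noteq> 0" if "v extreme_point_of K" for v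
  proof (rule polytope_vertices_propagate[OF K(1) p0 that])
    show "(y p0 = m p0 \<or> y p0 = - m p0) \<and> m p0 \<noteq> 0"
      using \<open>y p0 = m p0\<close> \<open>m p0 \<noteq> 0\<close> by simp
    show "(y q = m q \<or> y q = - m q) \<and> m q \<noteq> 0"
      if "adjacent_vertices K p q" "(y p = m p \<or> y p = - m p) \<and> m p \<noteq> 0" for p q
      using that(2) y_step[OF that(1)] m_step[OF that(1)]
      by (auto simp: linear_neg[OF linear_reflect])
  qed
  have "p \<in> {v. y v = m v} \<longleftrightarrow> q \<notin> {v. y v = m v}" if "adjacent_vertices K p q" for p q
  proof -
    have p: "y p = m p \<or> y p = - m p" "m p \<noteq> 0" and "m q \<noteq> 0"
      using invariant adjacent_vertices_imp_extreme_point[OF that] by blast+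
    have "m p \<noteq> - m p" "m q \<noteq> - m q"
      using p(2) \<open>m q \<noteq> 0\<close> real_vector_eq_neg_self_iff by blast+
    from p(1) show ?thesis
    proof
      assume "y p = m p"
      then have "y q = - m q"
        using y_step[OF that] m_step[OF that] by simp
      then show ?thesis
        using \<open>y p = m p\<close> \<open>m q \<noteq> - m q\<close> by auto
    next
      assume "y p = - m p"
      then have "y q = m q"
        using y_step[OF that] m_step[OF that] by (simp add: linear_neg[OF linear_reflect])
      then show ?thesis
        using \<open>y p = - m p\<close> \<open>m p \<noteq> - m p\<close> by auto
    qed
  qed
  then show False
    using odd_polygon_not_two_colourable[OF K odd] by blast
qed

lemma cross3_reflection_labelling_step:
  fixes K :: "(real^3) set"
  assumes n: "\<And>u v. u \<in> K \<Longrightarrow> v \<in> K \<Longrightarrow> n \<bullet> u = n \<bullet> v"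
    and w: "w \<in> reflection_labellings K" and pq: "adjacent_vertices K p q"
  shows "cross3 n (w q) = - reflect (p - q) (cross3 n (w p))"
proof -
  have "p \<in> K" "q \<in> K"
    using adjacent_vertices_imp_extreme_point[OF pq] by (simp_all add: extreme_point_of_imp_mem)
  then have "n \<bullet> (p - q) = 0"
    using n[of p q] by (simp add: inner_diff_right)
  moreover have "p - q \<noteq> 0"
    using pq by (simp add: adjacent_vertices_def)
  ultimately show ?thesis
    using reflection_labellingsD[OF w pq] by (simp add: cross3_reflect)
qed

lemma odd_polygon_labelling_values:
  fixes K :: "(real^3) set"
  assumes K: "polytope K" "aff_dim K = 2" and odd: "odd (card {v. v extreme_point_of K})"
    and n: "\<And>u v. u \<in> K \<Longrightarrow> v \<in> K \<Longrightarrow> n \<bullet> u = n \<bullet> v"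
    and w: "w \<in> reflection_labellings K" and p0: "p0 extreme_point_of K"
    and m0: "cross3 n (w p0) \<noteq> 0"
  shows "{x p0 | x. x \<in> reflection_labellings K} \<subseteq> span {n, w p0}"
proof
  define V where "V = {x p0 | x. x \<in> reflection_labellings K}"
  define m where "m = cross3 n (w p0)"
  fix u
  assume "u \<in> {x p0 | x. x \<in> reflection_labellings K}"
  then have "u \<in> V"
    unfolding V_def .
  have "subspace V"
    unfolding V_def by (rule subspace_reflection_labelling_values)
  moreover have "(\<lambda>_. n) \<in> reflection_labellings K"
    using const_reflection_labelling[of K n] n by blast
  then have "n \<in> V" "w p0 \<in> V"
    using w unfolding V_def by force+
  ultimately have span_V: "span {n, w p0} \<subseteq> V"
    by (simp add: span_minimal)
  have "y p0 \<noteq> m" if "y \<in> reflection_labellings K" for y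
    using odd_polygon_labelling_ne_antilabelling[OF K odd that, where m = "\<lambda>v. cross3 n (w v)"]
      cross3_reflection_labelling_step[OF n w] p0 m0
    unfolding m_def by blast
  then have "m \<notin> V"
    unfolding V_def by auto
  define t where "t = (u \<bullet> m) / (m \<bullet> m)"
  have rest: "u - t *\<^sub>R m \<in> span {n, w p0}"
    using cross3_orthogonal_complement_span[OF m0] unfolding t_def m_def .
  show "u \<in> span {n, w p0}"
  proof (cases "t = 0")
    case False
    have "u - t *\<^sub>R m \<in> V"
      using rest span_V by blast
    then have "u - (u - t *\<^sub>R m) \<in> V"
      by (rule subspace_diff[OF \<open>subspace V\<close> \<open>u \<in> V\<close>])
    then have "inverse t *\<^sub>R (t *\<^sub>R m) \<in> V"
      using \<open>subspace V\<close> subspace_mul by fastforce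
    then have "m \<in> V"
      using False by simp
    then show ?thesis
      using \<open>m \<notin> V\<close> by blast
  qed (use rest in simp)
qed

lemma odd_facet_labelling_values:
  fixes P F :: "(real^3) set"
  assumes P: "polytope P" and Q: "Q \<in> InCone P"
    and F: "F face_of P" "aff_dim F = 2" "odd (vertex_count F)"
    and n: "n \<noteq> 0" "\<And>u. u \<in> F \<Longrightarrow> n \<bullet> u = b"
    and pq: "adjacent_vertices F p q"
  shows "{x p | x. x \<in> reflection_labellings P} \<subseteq> span {n, corresponding_vertex Q P p}"
proof -
  define w where "w = corresponding_vertex Q P"
  have w: "w \<in> reflection_labellings F"
    using reflection_labellings_face[OF F(1) corresponding_vertex_reflection_labelling[OF P Q]]
    unfolding w_def .
  have "p \<in> F" "q \<in> F"
    using adjacent_vertices_imp_extreme_point[OF pq] by (simp_all add: extreme_point_of_imp_mem)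
  then have "n \<bullet> (p - q) = 0"
    using n(2) by (simp add: inner_diff_right)
  then have "cross3 n (w p) \<noteq> 0"
    using cross3_ne_0_if_orthogonal[OF n(1)]
      corresponding_vertex_inner_edge_ne_0[OF P Q adjacent_vertices_face[OF F(1) pq]]
    unfolding w_def by blast
  then have "{x p | x. x \<in> reflection_labellings F} \<subseteq> span {n, w p}"
    using odd_polygon_labelling_values[OF face_of_polytope_polytope[OF P F(1)] F(2) _ _ w
        adjacent_vertices_imp_extreme_point(1)[OF pq]] F(3) n(2)
    unfolding vertex_count_def by simp
  moreover have "{x p | x. x \<in> reflection_labellings P} \<subseteq> {x p | x. x \<in> reflection_labellings F}"
    using reflection_labellings_face[OF F(1)] by blast
  ultimately show ?thesis
    unfolding w_def by blast
qed

lemma two_odd_facets_labelling_values: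
  fixes P F G :: "(real^3) set"
  assumes P: "polytope P" "aff_dim P = 3" and Q: "Q \<in> InCone P"
    and F: "F face_of P" "aff_dim F = 2" "odd (vertex_count F)"
    and G: "G face_of P" "aff_dim G = 2" "odd (vertex_count G)"
    and FG: "F \<noteq> G" "aff_dim (F \<inter> G) = 1"
  obtains p where "p extreme_point_of P"
    "{x p | x. x \<in> reflection_labellings P} \<subseteq> span {corresponding_vertex Q P p}"
proof -
  obtain p q where pq: "adjacent_vertices F p q" "adjacent_vertices G p q"
    using faces_common_edge[OF P(1) F(1) G(1) FG(2)] .
  have "F \<noteq> {}" "F \<noteq> P" "G \<noteq> {}" "G \<noteq> P"
    using F(2) G(2) P(2) by auto
  obtain nF bF where nF: "nF \<noteq> 0" "\<And>x. x \<in> P \<Longrightarrow> nF \<bullet> x \<le> bF" "F = P \<inter> {x. nF \<bullet> x = bF}"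
    using proper_face_normal[OF P(1) F(1) \<open>F \<noteq> {}\<close> \<open>F \<noteq> P\<close>] by blast
  obtain nG bG where nG: "nG \<noteq> 0" "\<And>x. x \<in> P \<Longrightarrow> nG \<bullet> x \<le> bG" "G = P \<inter> {x. nG \<bullet> x = bG}"
    using proper_face_normal[OF P(1) G(1) \<open>G \<noteq> {}\<close> \<open>G \<noteq> P\<close>] by blast
  have "p \<in> F" "q \<in> F" "p \<in> G" "q \<in> G"
    using adjacent_vertices_imp_extreme_point[OF pq(1)] adjacent_vertices_imp_extreme_point[OF pq(2)]
    by (simp_all add: extreme_point_of_imp_mem)
  then have perp: "nF \<bullet> (p - q) = 0" "nG \<bullet> (p - q) = 0"
    using nF(3) nG(3) by (auto simp: inner_diff_right)
  have "nF \<notin> span {nG}"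
    using face_normals_not_parallel[OF nF(1,3) nG(3) \<open>p \<in> F\<close> \<open>p \<in> G\<close> FG(1)] .
  have "{x p | x. x \<in> reflection_labellings P}
      \<subseteq> span {nF, corresponding_vertex Q P p} \<inter> span {nG, corresponding_vertex Q P p}"
    using odd_facet_labelling_values[OF P(1) Q F nF(1) _ pq(1), of bF]
      odd_facet_labelling_values[OF P(1) Q G nG(1) _ pq(2), of bG] nF(3) nG(3)
    by blast
  also have "\<dots> \<subseteq> span {corresponding_vertex Q P p}"
    by (rule span_pair_Int_subset[OF perp
          corresponding_vertex_inner_edge_ne_0[OF P(1) Q adjacent_vertices_face[OF F(1) pq(1)]]
          \<open>nF \<notin> span {nG}\<close>])
  finally show ?thesis
    using that adjacent_vertices_imp_extreme_point(1)[OF adjacent_vertices_face[OF F(1) pq(1)]]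
    by blast
qed

lemma incone_dim_le_two_if_odd_facet:
  fixes P F :: "(real^3) set"
  assumes P: "polytope P" "aff_dim P = 3" "InCone P \<noteq> {}"
    and F: "F face_of P" "aff_dim F = 2" "odd (vertex_count F)"
  shows "incone_dim P \<le> 2"
proof -
  obtain Q where Q: "Q \<in> InCone P"
    using P(3) by blast
  have "F \<noteq> {}" "F \<noteq> P"
    using F(2) P(2) by auto
  then obtain n b where n: "n \<noteq> 0" "F = P \<inter> {x. n \<bullet> x = b}"
    using proper_face_normal[OF P(1) F(1)] by metis
  obtain p q where pq: "adjacent_vertices F p q"
    using polygon_has_edge[OF face_of_polytope_polytope[OF P(1) F(1)] F(2)] .
  have "incone_dim P \<le> dim {x p | x. x \<in> reflection_labellings P}"
    using incone_dim_le_dim[OF P(1)] adjacent_vertices_face[OF F(1) pq]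
      adjacent_vertices_imp_extreme_point(1) by blast
  also have "\<dots> \<le> card {n, corresponding_vertex Q P p}"
    using odd_facet_labelling_values[OF P(1) Q F n(1) _ pq, of b] n(2) by (auto intro: dim_le_card)
  also have "\<dots> \<le> 2"
    by (simp add: card_insert_le_m1)
  finally show ?thesis .
qed

lemma incone_dim_eq_one_if_adjacent_odd_facets:
  fixes P F G :: "(real^3) set"
  assumes P: "polytope P" "aff_dim P = 3" "InCone P \<noteq> {}"
    and F: "F face_of P" "aff_dim F = 2" "odd (vertex_count F)"
    and G: "G face_of P" "aff_dim G = 2" "odd (vertex_count G)"
    and FG: "F \<noteq> G" "aff_dim (F \<inter> G) = 1"
  shows "incone_dim P = 1"
proof -
  obtain Q where Q: "Q \<in> InCone P"
    using P(3) by blast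
  obtain p where p: "p extreme_point_of P"
    "{x p | x. x \<in> reflection_labellings P} \<subseteq> span {corresponding_vertex Q P p}"
    using two_odd_facets_labelling_values[OF P(1,2) Q F G FG] by blast
  have "incone_dim P \<le> dim {x p | x. x \<in> reflection_labellings P}"
    by (rule incone_dim_le_dim[OF P(1) p(1)])
  also have "\<dots> \<le> 1"
    using dim_le_card[OF p(2)] by simp
  finally show ?thesis
    using one_le_incone_dim[OF P(1) p(1) Q] by simp
qed

theorem corollary4p6:
  fixes P :: "(real^3) set"
  assumes "polytope P" and "aff_dim P = 3" and "InCone P \<noteq> {}"
  shows "((\<exists>F. F face_of P \<and> aff_dim F = 2 \<and> odd (vertex_count F)) \<longrightarrow> incone_dim P \<le> 2)
    \<and> ((\<exists>F G. F face_of P \<and> G face_of P \<and> F \<noteq> G \<and> aff_dim F = 2 \<and> aff_dim G = 2 \<and>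
            odd (vertex_count F) \<and> odd (vertex_count G) \<and> aff_dim (F \<inter> G) = 1)
         \<longrightarrow> incone_dim P = 1)"
proof (intro conjI impI)
  assume "\<exists>F. F face_of P \<and> aff_dim F = 2 \<and> odd (vertex_count F)"
  then show "incone_dim P \<le> 2"
    using incone_dim_le_two_if_odd_facet[OF assms] by blast
next
  assume "\<exists>F G. F face_of P \<and> G face_of P \<and> F \<noteq> G \<and> aff_dim F = 2 \<and> aff_dim G = 2 \<and>
    odd (vertex_count F) \<and> odd (vertex_count G) \<and> aff_dim (F \<inter> G) = 1"
  then show "incone_dim P = 1"
    using incone_dim_eq_one_if_adjacent_odd_facets[OF assms] by blast
qed

end
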